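(* Let $r\ge2$ be an integer and $\psi\in C_p(\mathbb{R})$. Assume there is a constant $m>0$ such that $m\,d(x)\le\psi(x)$ for all $x\in[0,1]$. Then $$\frac{mr}{r-1}\,x(1-x)\le m\,\tau_r(x)\le U_\psi(x),\qquad x\in[0,1].$$
   Context: $C_p(\mathbb{R})$ denotes the set of all continuous functions $f:\mathbb{R}\to\mathbb{R}$ periodic with period $1$ with $f(0)=0$. $d(x)=\min\{|x-z|: z\in\mathbb{Z}\}$ is the distance to $\mathbb{Z}$. For $\psi\in C_p(\mathbb{R})$, $U_\psi(x)=\sum_{j=0}^\infty r^{-j}\psi(r^jx)$, and $\tau_r=U_d$, i.e. $\tau_r(x)=\sum_{j=0}^\infty r^{-j}d(r^jx)$. *)

theory Defs
  imports "HOL-Analysis.Analysis"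
begin

definition Cp :: "(real \<Rightarrow> real) set" where
  "Cp = {f. continuous_on UNIV f \<and> (\<forall>x. f (x + 1) = f x) \<and> f 0 = 0}"

definition dZ :: "real \<Rightarrow> real" where
  "dZ x = (INF z\<in>\<int>. \<bar>x - z\<bar>)"

definition U :: "real \<Rightarrow> (real \<Rightarrow> real) \<Rightarrow> real \<Rightarrow> real" where
  "U r \<psi> x = (\<Sum>j. r powi (- int j) * \<psi> (r ^ j * x))"

definition tau :: "real \<Rightarrow> real \<Rightarrow> real" where
  "tau r = U r dZ"

end

theory Submission
  imports Defs
begin

text \<open>
  With \<open>q(t) = frac t (1 - frac t)\<close> (\<open>frac_parabola\<close> below) and integer \<open>r \<ge> 1\<close>, an elementary case analysis
  gives the functional inequality \<open>r q(t) \<le> (r - 1) d(t) + q(r t)\<close>. Iterating it \<open>n\<close> times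
  bounds \<open>r/(r-1) q(x)\<close> by the \<open>n\<close>-th partial sum of \<open>\<tau>\<^sub>r(x)\<close> plus an error
  \<open>O(r\<^sup>-\<^sup>n)\<close>, which gives the lower bound since \<open>q(x) = x(1-x)\<close> on \<open>[0,1]\<close>. The upper bound
  is termwise comparison of the series, after extending \<open>m d \<le> \<psi>\<close> from \<open>[0,1]\<close>
  to \<open>\<real>\<close> by periodicity.
\<close>

lemma dZ_eq_min_frac: "dZ x = min (frac x) (1 - frac x)"
proof -
  let ?f = "\<lambda>z. \<bar>x - z\<bar>"
  have bdd: "bdd_below (?f ` \<int>)"
    by (rule bdd_belowI[of _ 0]) auto
  have frac_x: "frac x = x - of_int \<lfloor>x\<rfloor>"
    by (simp add: frac_def)
  have "min (frac x) (1 - frac x) \<le> ?f z" if "z \<in> \<int>" for z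
  proof -
    obtain k where k: "z = of_int k"
      using \<open>z \<in> \<int>\<close> by (rule Ints_cases)
    show ?thesis
    proof (cases "k \<le> \<lfloor>x\<rfloor>")
      case True
      then have "frac x \<le> ?f z"
        using k frac_x by (simp add: abs_if)
      then show ?thesis by linarith
    next
      case False
      then have "real_of_int k \<ge> of_int (\<lfloor>x\<rfloor> + 1)"
        by (simp only: of_int_le_iff)
      then have "1 - frac x \<le> ?f z"
        using k frac_x by simp
      then show ?thesis by linarith
    qed
  qed
  then have "min (frac x) (1 - frac x) \<le> dZ x"
    unfolding dZ_def by (intro cINF_greatest) auto
  moreover have "dZ x \<le> ?f (of_int \<lfloor>x\<rfloor>)" "dZ x \<le> ?f (of_int (\<lfloor>x\<rfloor> + 1))"
    unfolding dZ_def by (intro cINF_lower[OF bdd] Ints_of_int)+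
  moreover have "?f (of_int \<lfloor>x\<rfloor>) = frac x" "?f (of_int (\<lfloor>x\<rfloor> + 1)) = 1 - frac x"
    using frac_x frac_lt_1[of x] by auto
  ultimately show ?thesis by linarith
qed

lemma dZ_frac [simp]: "dZ (frac x) = dZ x"
  by (simp add: dZ_eq_min_frac)

lemma dZ_uminus [simp]: "dZ (- x) = dZ x"
proof (cases "x \<in> \<int>")
  case True
  then obtain k where "x = of_int k"
    by (rule Ints_cases)
  then show ?thesis
    by (simp add: dZ_eq_min_frac frac_neg)
qed (simp add: dZ_eq_min_frac frac_neg min.commute)

lemma dZ_nonneg: "0 \<le> dZ x" and dZ_le_half: "dZ x \<le> 1/2"
  using frac_ge_0[of x] frac_lt_1[of x] by (auto simp: dZ_eq_min_frac min_def)

lemma bounded_range_dZ: "bounded (range dZ)"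
  using dZ_nonneg dZ_le_half
  by (intro bounded_subset[OF bounded_closed_interval[of 0 "1/2::real"]]) auto

lemma Cp_add_of_int:
  assumes "\<psi> \<in> Cp"
  shows "\<psi> (x + of_int k) = \<psi> x"
proof -
  have "\<psi> (y + real n) = \<psi> y" for y n
  proof (induction n)
    case (Suc n)
    have "\<psi> (y + real (Suc n)) = \<psi> ((y + real n) + 1)"
      by (simp add: add_ac)
    also have "\<dots> = \<psi> y"
      using Suc assms unfolding Cp_def by simp
    finally show ?case .
  qed simp
  from this[of x "nat k"] this[of "x + of_int k" "nat (- k)"] show ?thesis
    by (cases "k \<ge> 0") simp_all
qed

lemma Cp_frac: "\<psi> \<in> Cp \<Longrightarrow> \<psi> (frac x) = \<psi> x"
  using Cp_add_of_int[of \<psi> "frac x" "\<lfloor>x\<rfloor>"] by (simp add: frac_def)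

lemma bounded_range_Cp:
  assumes "\<psi> \<in> Cp"
  shows "bounded (range \<psi>)"
proof (rule bounded_subset)
  have "continuous_on {0..1} \<psi>"
    using assms continuous_on_subset unfolding Cp_def by blast
  then show "bounded (\<psi> ` {0..1})"
    by (intro compact_imp_bounded compact_continuous_image) auto
  have "\<psi> x \<in> \<psi> ` {0..1}" for x
    using Cp_frac[OF assms, of x] frac_lt_1[of x] by (metis atLeastAtMost_iff frac_ge_0 image_eqI less_imp_le)
  then show "range \<psi> \<subseteq> \<psi> ` {0..1}"
    by blast
qed

lemma U_altdef: "U R f x = (\<Sum>j. f (R ^ j * x) / R ^ j)"
  by (simp add: U_def power_int_minus divide_inverse mult.commute)

lemma summable_U_series:
  fixes R :: real
  assumes "R > 1" and "bounded (range f)"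
  shows "summable (\<lambda>j. f (R ^ j * x) / R ^ j)"
proof -
  obtain B where B: "\<And>t. \<bar>f t\<bar> \<le> B"
    using assms(2) by (auto simp: bounded_iff)
  show ?thesis
  proof (rule summable_comparison_test)
    have "norm (f (R ^ j * x) / R ^ j) \<le> B * (1 / R) ^ j" for j
      using B[of "R ^ j * x"] assms(1) by (simp add: power_one_over abs_divide divide_right_mono)
    then show "\<exists>N. \<forall>j\<ge>N. norm (f (R ^ j * x) / R ^ j) \<le> B * (1 / R) ^ j"
      by blast
    show "summable (\<lambda>j. B * (1 / R) ^ j)"
      using assms(1) by (intro summable_mult summable_geometric) auto
  qed
qed

lemma U_mono:
  fixes R :: real
  assumes "R > 1" and "bounded (range f)" and "bounded (range g)" and "\<And>t. f t \<le> g t"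
  shows "U R f x \<le> U R g x"
  unfolding U_altdef
proof (rule suminf_le)
  show "f (R ^ j * x) / R ^ j \<le> g (R ^ j * x) / R ^ j" for j
    using assms(1,4) by (intro divide_right_mono) auto
qed (use assms summable_U_series in auto)

lemma U_cmult:
  fixes R :: real
  assumes "R > 1" and "bounded (range f)"
  shows "U R (\<lambda>t. c * f t) x = c * U R f x"
  unfolding U_altdef
  using suminf_mult[OF summable_U_series[OF assms], of c] by (simp add: mult.assoc)

lemma le_U_if_le_step:
  fixes R :: real
  assumes R: "R > 1" and "bounded (range h)" and g_le: "\<And>t. g t \<le> B"
    and step: "\<And>t. g t \<le> h t + g (R * t) / R"
  shows "g x \<le> U R h x"
proof -
  have partial: "g x \<le> (\<Sum>j<n. h (R ^ j * x) / R ^ j) + g (R ^ n * x) / R ^ n" for n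
  proof (induction n)
    case (Suc n)
    have "g (R ^ n * x) / R ^ n \<le> (h (R ^ n * x) + g (R * (R ^ n * x)) / R) / R ^ n"
      using step R by (intro divide_right_mono) auto
    also have "\<dots> = h (R ^ n * x) / R ^ n + g (R ^ Suc n * x) / R ^ Suc n"
      by (simp add: add_divide_distrib mult.assoc)
    finally show ?case
      using Suc by simp
  qed simp
  have "(\<lambda>n. (\<Sum>j<n. h (R ^ j * x) / R ^ j) + B * inverse (R ^ n)) \<longlonglongrightarrow> U R h x + B * 0"
    unfolding U_altdef
    using R assms(2)
    by (intro tendsto_intros summable_LIMSEQ summable_U_series LIMSEQ_inverse_realpow_zero)
  moreover have "g x \<le> (\<Sum>j<n. h (R ^ j * x) / R ^ j) + B * inverse (R ^ n)" for n
  proof -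
    have "g (R ^ n * x) / R ^ n \<le> B / R ^ n"
      using g_le R by (intro divide_right_mono) auto
    then show ?thesis
      using partial[of n] by (simp add: divide_inverse)
  qed
  ultimately show ?thesis
    by (intro LIMSEQ_le_const) auto
qed

definition frac_parabola :: "real \<Rightarrow> real" where
  "frac_parabola t = frac t * (1 - frac t)"

lemma frac_parabola_nonneg: "0 \<le> frac_parabola t"
  using frac_lt_1[of t] by (simp add: frac_parabola_def)

lemma frac_parabola_le_quarter: "frac_parabola t \<le> 1/4"
proof -
  have "0 \<le> (frac t - 1/2)\<^sup>2"
    by simp
  then show ?thesis
    by (simp add: frac_parabola_def power2_eq_square algebra_simps)
qed

lemma frac_parabola_uminus [simp]: "frac_parabola (- t) = frac_parabola t"
  by (simp add: frac_parabola_def frac_neg)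

lemma frac_parabola_eq_on_unit_interval:
  "x \<in> {0..1} \<Longrightarrow> frac_parabola x = x * (1 - x)"
  by (cases "x = 1") (auto simp: frac_parabola_def)

lemma frac_parabola_step_frac_le_half:
  fixes r :: nat
  assumes "r \<ge> 1" and "frac t \<le> 1/2"
  shows "real r * frac_parabola t \<le> (real r - 1) * dZ t + frac_parabola (real r * t)"
proof -
  define x where "x = frac t"
  have x: "0 \<le> x" "x \<le> 1/2"
    using assms(2) by (auto simp: x_def)
  have "dZ t = x"
    using x by (simp add: dZ_eq_min_frac x_def)
  moreover have "frac_parabola t = x * (1 - x)"
    by (simp add: frac_parabola_def x_def)
  moreover have "frac_parabola (real r * t) = frac_parabola (real r * x)"
  proof -
    have "real r * t = real r * x + of_int (int r * \<lfloor>t\<rfloor>)"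
      by (simp add: x_def frac_def algebra_simps)
    then show ?thesis
      by (simp only: frac_parabola_def frac_add_of_int_right)
  qed
  moreover have "real r * (x * (1 - x)) \<le> (real r - 1) * x + frac_parabola (real r * x)"
  proof (cases "real r * x < 1")
    case True
    then have "frac_parabola (real r * x) = real r * x * (1 - real r * x)"
      using x by (simp add: frac_parabola_def frac_eq)
    moreover have "0 \<le> (real r - 1) * x * (1 - real r * x)"
      using True x assms(1) by simp
    ultimately show ?thesis
      by (simp add: algebra_simps)
  next
    case False
    then have "x * (1 - real r * x) \<le> 0"
      using x by (simp add: mult_nonneg_nonpos)
    then show ?thesis
      using frac_parabola_nonneg[of "real r * x"] by (simp add: algebra_simps)
  qed
  ultimately show ?thesis
    by simp
qed

lemma frac_parabola_step:
  fixes r :: nat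
  assumes "r \<ge> 1"
  shows "real r * frac_parabola t \<le> (real r - 1) * dZ t + frac_parabola (real r * t)"
proof (cases "frac t \<le> 1/2")
  case True
  then show ?thesis
    using frac_parabola_step_frac_le_half[OF assms] by blast
next
  case False
  then have "frac (- t) \<le> 1/2"
    by (auto simp: frac_neg)
  from frac_parabola_step_frac_le_half[OF assms this] show ?thesis
    by simp
qed

lemma frac_parabola_le_tau:
  fixes r :: nat
  assumes "r \<ge> 2"
  shows "real r / (real r - 1) * frac_parabola x \<le> tau (real r) x"
  unfolding tau_def
proof (rule le_U_if_le_step[where B = "real r / (real r - 1) / 4"])
  have r: "real r - 1 > 0"
    using assms by simp
  show "real r / (real r - 1) * frac_parabola t \<le> real r / (real r - 1) / 4" for t
    using mult_left_mono[OF frac_parabola_le_quarter, of "real r / (real r - 1)"] r by simp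
  show "real r / (real r - 1) * frac_parabola t
          \<le> dZ t + real r / (real r - 1) * frac_parabola (real r * t) / real r" for t
  proof -
    have "real r * frac_parabola t / (real r - 1)
            \<le> ((real r - 1) * dZ t + frac_parabola (real r * t)) / (real r - 1)"
      using frac_parabola_step[of r t] assms r by (intro divide_right_mono) auto
    moreover have "dZ t + real r / (real r - 1) * frac_parabola (real r * t) / real r
        = ((real r - 1) * dZ t + frac_parabola (real r * t)) / (real r - 1)"
      using r assms by (simp add: field_simps)
    ultimately show ?thesis
      by simp
  qed
qed (use assms bounded_range_dZ in auto)

theorem lemma3p3:
  fixes r :: nat and \<psi> :: "real \<Rightarrow> real" and m :: real
  assumes "r \<ge> 2" and "\<psi> \<in> Cp" and "m > 0"
    and "\<forall>x\<in>{0..1}. m * dZ x \<le> \<psi> x"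
  shows "\<forall>x\<in>{0..1}. m * real r / (real r - 1) * x * (1 - x) \<le> m * tau (real r) x
                       \<and> m * tau (real r) x \<le> U (real r) \<psi> x"
proof
  fix x :: real
  assume x: "x \<in> {0..1}"
  have R: "real r > 1"
    using assms(1) by simp
  have "m * (real r / (real r - 1) * frac_parabola x) \<le> m * tau (real r) x"
    using frac_parabola_le_tau[OF assms(1)] assms(3) by (intro mult_left_mono) auto
  then have lower: "m * real r / (real r - 1) * x * (1 - x) \<le> m * tau (real r) x"
    using frac_parabola_eq_on_unit_interval[OF x] by (simp add: mult.assoc)
  have "m * dZ y \<le> \<psi> y" for y
    using assms(4) Cp_frac[OF assms(2), of y] frac_lt_1[of y]
    by (metis atLeastAtMost_iff dZ_frac frac_ge_0 less_eq_real_def)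
  moreover have "bounded (range (\<lambda>t. m * dZ t))"
    using bounded_scaling[OF bounded_range_dZ, of m] by (simp add: image_image)
  ultimately have "U (real r) (\<lambda>t. m * dZ t) x \<le> U (real r) \<psi> x"
    using R bounded_range_Cp[OF assms(2)] by (intro U_mono)
  then show "m * real r / (real r - 1) * x * (1 - x) \<le> m * tau (real r) x
               \<and> m * tau (real r) x \<le> U (real r) \<psi> x"
    using lower U_cmult[OF R bounded_range_dZ] by (simp add: tau_def)
qed

end
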